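(* Let $L$ spin-orbitals be indexed by $\{1,\dots,L\}$ and $1\le N_{\mathrm{occ}}<L$; an o-operator is $\hat a^\dagger_p$ or $\hat a_p$ with $p\le N_{\mathrm{occ}}$, a v-operator one with $p>N_{\mathrm{occ}}$, and an arbitrary operator is a creation or annihilation operator whose spin-orbital is not specified to be occupied or virtual (neither an o- nor a v-operator). Let $\hat C$ be a chain of $n$ excitation operators $\hat E^a_i=\hat a^\dagger_a\hat a_i$ and $n$ deexcitation operators $\hat D^i_a=\hat a^\dagger_i\hat a_a$ ($i\le N_{\mathrm{occ}}<a$), and let $S=s_1\cdots s_{2n}$ be the word obtained by replacing each deexcitation operator by "(" and each excitation operator by ")". Let $N\ge1$ and $K\in\{0,\dots,2n\}$, and let $\hat C^N_K$ be the chain obtained from $\hat C$ by inserting, immediately after its $K$-th (de)excitation operator (read from left to right), $N$ arbitrary creation operators followed by $N$ arbitrary annihilation operators. For any chain $\hat X$ of elementary operators (expanding each (de)excitation operator into its two factors), let $\mathcal W(\hat X)$ be the number of partitions of its elementary operators into pairs such that every pair $(x,y)$, with $x$ to the left of $y$, satisfies either: $x$ is a creation operator, $y$ is an annihilation operator, and neither is a v-operator; or: $x$ is an annihilation operator, $y$ is a creation operator, and neither is an o-operator. Then: (i) if $S$ is not a Dyck word, $\mathcal W(\hat C^N_K)=0$; (ii) if $S$ is a Dyck word, then $$\mathcal W(\hat C^N_K)=N!\,\mathcal M^N_{d_K}\,\mathcal W(\hat C),\qquad \mathcal M^N_{d_K}=\sum_{\ell=0}^{\min(N,d_K)}\binom{N}{\ell}^2\binom{d_K+N-\ell}{N},$$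 where $d_K$ is the number of "(" minus the number of ")" among $s_1,\dots,s_K$ (so $d_0=0$).
   Context: A Dyck word is a finite word over $\{(,)\}$ with as many opening as closing brackets, every prefix of which contains at least as many opening as closing brackets. Motivation: partitions into pairs are full contractions (Wick's theorem) relative to the Fermi vacuum (Slater determinant with spin-orbitals $1,\dots,N_{\mathrm{occ}}$ occupied), and the allowed pairs are exactly those whose contraction value, given by $\langle \hat a^\dagger_r\hat a_s\rangle=\delta_{rs}n_rn_s$ and $\langle \hat a_s\hat a^\dagger_r\rangle=\delta_{rs}(1-n_r)(1-n_s)$ with $n_p$ the occupation number ($1$ for o-, $0$ for v-operators, undetermined for arbitrary operators) and zero for contractions of two creation or two annihilation operators, is not forced to vanish; $\mathcal W$ counts these "well" full contractions. The inserted operators are regarded as distinct objects. *)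

theory Defs
  imports Main
begin

text \<open>An elementary operator: (is_creation, spin-orbital). The spin-orbital is
  Some p for a specified orbital p, None for an arbitrary operator.\<close>
type_synonym elop = "bool \<times> nat option"

definition is_o :: "nat \<Rightarrow> elop \<Rightarrow> bool" where
  "is_o Nocc x = (\<exists>p. snd x = Some p \<and> p \<le> Nocc)"

definition is_v :: "nat \<Rightarrow> elop \<Rightarrow> bool" where
  "is_v Nocc x = (\<exists>p. snd x = Some p \<and> Nocc < p)"

definition allowed_pair :: "nat \<Rightarrow> elop \<Rightarrow> elop \<Rightarrow> bool" where
  "allowed_pair Nocc x y =
     ((fst x \<and> \<not> fst y \<and> \<not> is_v Nocc x \<and> \<not> is_v Nocc y) \<or>
      (\<not> fst x \<and> fst y \<and> \<not> is_o Nocc x \<and> \<not> is_o Nocc y))"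

definition pair_partitions :: "nat \<Rightarrow> (nat \<times> nat) set set" where
  "pair_partitions m = {P. P \<subseteq> {(i,j). i < j \<and> j < m} \<and>
      (\<forall>k<m. \<exists>!q. q \<in> P \<and> (fst q = k \<or> snd q = k))}"

definition W :: "nat \<Rightarrow> elop list \<Rightarrow> nat" where
  "W Nocc X = card {P \<in> pair_partitions (length X).
      \<forall>(i,j)\<in>P. allowed_pair Nocc (X ! i) (X ! j)}"

text \<open>A (de)excitation operator: (is_deexcitation, i, a).
  Excitation E^a_i = a^dag_a a_i, deexcitation D^i_a = a^dag_i a_a.\<close>
type_synonym exop = "bool \<times> nat \<times> nat"

fun expand :: "exop \<Rightarrow> elop list" where
  "expand (True, i, a) = [(True, Some i), (False, Some a)]"
| "expand (False, i, a) = [(True, Some a), (False, Some i)]"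

definition expand_chain :: "exop list \<Rightarrow> elop list" where
  "expand_chain C = concat (map expand C)"

definition insert_chain :: "exop list \<Rightarrow> nat \<Rightarrow> nat \<Rightarrow> elop list" where
  "insert_chain C N K = expand_chain (take K C) @ replicate N (True, None)
      @ replicate N (False, None) @ expand_chain (drop K C)"

text \<open>Words over {(,)}: True = "(", False = ")".\<close>
definition word_of :: "exop list \<Rightarrow> bool list" where
  "word_of C = map fst C"

definition height :: "bool list \<Rightarrow> int" where
  "height w = int (count_list w True) - int (count_list w False)"

definition dyck :: "bool list \<Rightarrow> bool" where
  "dyck w = (height w = 0 \<and> (\<forall>k \<le> length w. 0 \<le> height (take k w)))"

definition Mcoef :: "nat \<Rightarrow> nat \<Rightarrow> nat" where
  "Mcoef N d = (\<Sum>l = 0..min N d. (N choose l)^2 * ((d + N - l) choose N))"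

end

theory Submission
  imports Defs "HOL-Library.Multiset"
begin

(* Each elementary operator falls into one of six classes (occupied, virtual or arbitrary;
   creation or annihilation), and whether two operators may be paired depends only on their
   classes. Reading a chain from left to right, a full contraction is chosen by letting each
   operator either stay open or close one of the open operators to its left, so W satisfies a
   recursion in the multiset of classes of the open operators.
   In an excitation chain the o-lines and the v-lines are independent and each behaves like a
   matching of the brackets of S; hence W(C) is the square of the number of such matchings,
   which vanishes unless S is a Dyck word. After s_1 ... s_K exactly d_K occupied creators and
   d_K virtual annihilators are open. If l of the N inserted creators close virtual
   annihilators, then N - l of the inserted annihilators must close open creators, so that
   d_K open lines of each kind are again handed to the rest of the word. *)

section \<open>Counting perfect matchings by a left-to-right scan\<close>

definition matchings ::
    "('a \<Rightarrow> 'a \<Rightarrow> bool) \<Rightarrow> (nat \<Rightarrow> 'a) \<Rightarrow> nat set \<Rightarrow> nat set \<Rightarrow> (nat \<times> nat) set set" where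
  "matchings R lab A U = {P. P \<subseteq> {(i, j). i < j \<and> i \<in> A \<and> j \<in> A \<and> R (lab i) (lab j) \<and> \<not> (i \<in> U \<and> j \<in> U)} \<and>
      (\<forall>k\<in>A. \<exists>!q. q \<in> P \<and> (fst q = k \<or> snd q = k))}"

lemma matchingsI:
  assumes "\<And>i j. (i, j) \<in> P \<Longrightarrow> i < j \<and> i \<in> A \<and> j \<in> A \<and> R (lab i) (lab j) \<and> \<not> (i \<in> U \<and> j \<in> U)"
    and "\<And>k. k \<in> A \<Longrightarrow> \<exists>!q. q \<in> P \<and> (fst q = k \<or> snd q = k)"
  shows "P \<in> matchings R lab A U"
  unfolding matchings_def mem_Collect_eq
proof (intro conjI ballI subsetI)
  fix q assume "q \<in> P"
  then show "q \<in> {(i, j). i < j \<and> i \<in> A \<and> j \<in> A \<and> R (lab i) (lab j) \<and> \<not> (i \<in> U \<and> j \<in> U)}"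
    using assms(1) by (cases q) auto
qed (fact assms(2))

lemma matchings_pairD:
  "P \<in> matchings R lab A U \<Longrightarrow> (i, j) \<in> P \<Longrightarrow>
     i < j \<and> i \<in> A \<and> j \<in> A \<and> R (lab i) (lab j) \<and> \<not> (i \<in> U \<and> j \<in> U)"
  unfolding matchings_def by blast

lemma matchings_coverD:
  "P \<in> matchings R lab A U \<Longrightarrow> k \<in> A \<Longrightarrow> \<exists>!q. q \<in> P \<and> (fst q = k \<or> snd q = k)"
  unfolding matchings_def by blast

lemma matchings_pair_eq:
  assumes P: "P \<in> matchings R lab A U" and "(i, j) \<in> P" "(i', j') \<in> P"
    and "i' = i \<or> i' = j \<or> j' = i \<or> j' = j"
  shows "(i', j') = (i, j)"
proof -
  have "i \<in> A" "j \<in> A" using matchings_pairD[OF P \<open>(i, j) \<in> P\<close>] by auto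
  with assms show ?thesis using matchings_coverD[OF P] by (metis fst_conv snd_conv)
qed

lemma finite_matchings: "finite A \<Longrightarrow> finite (matchings R lab A U)"
  by (rule finite_subset[of _ "Pow (A \<times> A)"]) (auto dest: matchings_pairD)

lemma matchings_Diff_pair:
  assumes P: "P \<in> matchings R lab A U" and uz: "(u, z) \<in> P"
  shows "P - {(u, z)} \<in> matchings R lab (A - {u, z}) (U - {u, z})"
proof (rule matchingsI)
  fix i j assume ij: "(i, j) \<in> P - {(u, z)}"
  then have "\<not> (i = u \<or> i = z \<or> j = u \<or> j = z)"
    using matchings_pair_eq[OF P uz, of i j] by blast
  then show "i < j \<and> i \<in> A - {u, z} \<and> j \<in> A - {u, z} \<and> R (lab i) (lab j) \<and>
      \<not> (i \<in> U - {u, z} \<and> j \<in> U - {u, z})"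
    using matchings_pairD[OF P, of i j] ij by auto
next
  fix k assume k: "k \<in> A - {u, z}"
  then obtain q where q: "q \<in> P" "fst q = k \<or> snd q = k"
    and uniq: "\<And>q'. q' \<in> P \<Longrightarrow> fst q' = k \<or> snd q' = k \<Longrightarrow> q' = q"
    using matchings_coverD[OF P, of k] by blast
  have "q \<noteq> (u, z)" using q(2) k by auto
  show "\<exists>!q. q \<in> P - {(u, z)} \<and> (fst q = k \<or> snd q = k)"
  proof (rule ex1I[of _ q])
    show "q \<in> P - {(u, z)} \<and> (fst q = k \<or> snd q = k)"
      using q \<open>q \<noteq> (u, z)\<close> by blast
  next
    fix q' assume "q' \<in> P - {(u, z)} \<and> (fst q' = k \<or> snd q' = k)"
    then show "q' = q" using uniq by blast
  qed
qed

lemma matchings_insert_pair: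
  assumes Q: "Q \<in> matchings R lab A U" and "u \<notin> A" "z \<notin> A" "u < z" "R (lab u) (lab z)"
    and "z \<notin> U"
  shows "insert (u, z) Q \<in> matchings R lab (insert u (insert z A)) (insert u U)"
proof (rule matchingsI)
  fix i j assume "(i, j) \<in> insert (u, z) Q"
  then show "i < j \<and> i \<in> insert u (insert z A) \<and> j \<in> insert u (insert z A) \<and> R (lab i) (lab j) \<and>
      \<not> (i \<in> insert u U \<and> j \<in> insert u U)"
    using assms matchings_pairD[OF Q, of i j] by auto
next
  fix k assume k: "k \<in> insert u (insert z A)"
  have avoid: "fst q \<notin> {u, z} \<and> snd q \<notin> {u, z}" if "q \<in> Q" for q
    using that assms(2,3) matchings_pairD[OF Q, of "fst q" "snd q"] by auto
  show "\<exists>!q. q \<in> insert (u, z) Q \<and> (fst q = k \<or> snd q = k)"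
  proof (cases "k \<in> {u, z}")
    case True
    show ?thesis
    proof (rule ex1I[of _ "(u, z)"])
      fix q' assume "q' \<in> insert (u, z) Q \<and> (fst q' = k \<or> snd q' = k)"
      then show "q' = (u, z)" using True avoid[of q'] by auto
    qed (use True in auto)
  next
    case False
    then have "k \<in> A" using k by simp
    then obtain q where q: "q \<in> Q" "fst q = k \<or> snd q = k"
      and uniq: "\<And>q'. q' \<in> Q \<Longrightarrow> fst q' = k \<or> snd q' = k \<Longrightarrow> q' = q"
      using matchings_coverD[OF Q] by blast
    show ?thesis
    proof (rule ex1I[of _ q])
      fix q' assume q': "q' \<in> insert (u, z) Q \<and> (fst q' = k \<or> snd q' = k)"
      then have "q' \<noteq> (u, z)" using False by auto
      then show "q' = q" using q' uniq by blast
    qed (use q in auto)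
  qed
qed

lemma matchings_antimono: "U \<subseteq> U' \<Longrightarrow> matchings R lab A U' \<subseteq> matchings R lab A U"
  unfolding matchings_def by blast

lemma bij_betw_matchings_Diff_pair:
  assumes "u \<in> U" "U \<subseteq> A" "k \<in> A" "k \<notin> U" "u < k" "R (lab u) (lab k)"
  shows "bij_betw (\<lambda>P. P - {(u, k)}) {P \<in> matchings R lab A U. (u, k) \<in> P}
           (matchings R lab (A - {u, k}) (U - {u}))"
proof (rule bij_betw_byWitness[where f' = "insert (u, k)"])
  show "\<forall>P\<in>{P \<in> matchings R lab A U. (u, k) \<in> P}. insert (u, k) (P - {(u, k)}) = P"
    by auto
  show "\<forall>Q\<in>matchings R lab (A - {u, k}) (U - {u}). insert (u, k) Q - {(u, k)} = Q"
    using matchings_pairD[of _ R lab "A - {u, k}" "U - {u}" u k] by auto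
  have "U - {u, k} = U - {u}" using assms(4) by auto
  then show "(\<lambda>P. P - {(u, k)}) ` {P \<in> matchings R lab A U. (u, k) \<in> P}
      \<subseteq> matchings R lab (A - {u, k}) (U - {u})"
    using matchings_Diff_pair[of _ R lab A U u k] by auto
  have "insert u (insert k (A - {u, k})) = A" "insert u (U - {u}) = U"
    using assms(1-3) by auto
  then show "insert (u, k) ` matchings R lab (A - {u, k}) (U - {u})
      \<subseteq> {P \<in> matchings R lab A U. (u, k) \<in> P}"
    using matchings_insert_pair[of _ R lab "A - {u, k}" "U - {u}" u k] assms(4-6) by auto
qed

lemma card_matchings_split:
  assumes "finite A" "k \<in> A" "U \<subseteq> A" "k \<notin> U" "\<forall>u\<in>U. u < k"
  shows "card (matchings R lab A U) = card (matchings R lab A (insert k U)) +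
    (\<Sum>u\<in>U. if R (lab u) (lab k) then card (matchings R lab (A - {u, k}) (U - {u})) else 0)"
proof -
  define S where "S u = {P \<in> matchings R lab A U. (u, k) \<in> P}" for u
  define Uk where "Uk = {u \<in> U. R (lab u) (lab k)}"
  have "matchings R lab A U \<subseteq> matchings R lab A (insert k U) \<union> (\<Union>u\<in>Uk. S u)"
  proof
    fix P assume P: "P \<in> matchings R lab A U"
    show "P \<in> matchings R lab A (insert k U) \<union> (\<Union>u\<in>Uk. S u)"
    proof (cases "\<exists>u\<in>U. (u, k) \<in> P")
      case True
      then obtain u where "u \<in> U" "(u, k) \<in> P" by blast
      then show ?thesis using matchings_pairD[OF P, of u k] P unfolding S_def Uk_def by blast
    next
      case False
      have "P \<in> matchings R lab A (insert k U)"
      proof (rule matchingsI)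
        fix i j assume ij: "(i, j) \<in> P"
        have "\<not> (i \<in> insert k U \<and> j \<in> insert k U)"
          using matchings_pairD[OF P ij] ij False assms(5) by auto
        then show "i < j \<and> i \<in> A \<and> j \<in> A \<and> R (lab i) (lab j) \<and> \<not> (i \<in> insert k U \<and> j \<in> insert k U)"
          using matchings_pairD[OF P ij] by blast
      qed (fact matchings_coverD[OF P])
      then show ?thesis by blast
    qed
  qed
  moreover have "matchings R lab A (insert k U) \<union> (\<Union>u\<in>Uk. S u) \<subseteq> matchings R lab A U"
    using matchings_antimono[of U "insert k U" R lab A] unfolding S_def by blast
  ultimately have split: "matchings R lab A U = matchings R lab A (insert k U) \<union> (\<Union>u\<in>Uk. S u)"
    by (rule antisym)
  have disj: "matchings R lab A (insert k U) \<inter> (\<Union>u\<in>Uk. S u) = {}"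
    using matchings_pairD[of _ R lab A "insert k U"] unfolding S_def Uk_def by blast
  have disj_S: "S u \<inter> S v = {}" if "u \<noteq> v" for u v
    using matchings_pair_eq[of _ R lab A U u k] that unfolding S_def by blast
  have fin: "finite (matchings R lab A U')" for U' using assms(1) by (rule finite_matchings)
  have fin_Uk: "finite Uk" using assms(1,3) unfolding Uk_def by (auto intro: finite_subset)
  have card_S: "card (S u) = card (matchings R lab (A - {u, k}) (U - {u}))" if "u \<in> Uk" for u
    unfolding S_def using that assms
    by (intro bij_betw_same_card[OF bij_betw_matchings_Diff_pair]) (auto simp: Uk_def)
  have "card (matchings R lab A U) = card (matchings R lab A (insert k U)) + card (\<Union>u\<in>Uk. S u)"
    unfolding split using fin disj
    by (intro card_Un_disjoint) (auto intro: finite_subset[OF _ fin[of U]] simp: S_def)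
  also have "card (\<Union>u\<in>Uk. S u) = (\<Sum>u\<in>Uk. card (S u))"
    using fin_Uk fin disj_S by (intro card_UN_disjoint) (auto simp: S_def)
  also have "\<dots> = (\<Sum>u\<in>U. if R (lab u) (lab k) then card (matchings R lab (A - {u, k}) (U - {u})) else 0)"
    using card_S assms(1,3) unfolding Uk_def by (simp add: sum.inter_filter finite_subset)
  finally show ?thesis .
qed

lemma matchings_self: "matchings R lab U U = (if U = {} then {{}} else {})"
proof (cases "U = {}")
  case True
  then show ?thesis unfolding matchings_def by auto
next
  case False
  then obtain k where k: "k \<in> U" by blast
  have "P \<notin> matchings R lab U U" for P
  proof
    assume P: "P \<in> matchings R lab U U"
    then obtain q where "q \<in> P" using matchings_coverD[OF P k] by blast
    then show False using matchings_pairD[OF P, of "fst q" "snd q"] by auto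
  qed
  then show ?thesis using False by auto
qed

(* M holds the elements read so far that still wait for a partner to their right. *)
primrec scan_count :: "('a \<Rightarrow> 'a \<Rightarrow> bool) \<Rightarrow> 'a multiset \<Rightarrow> 'a list \<Rightarrow> nat" where
  "scan_count R M [] = (if M = {#} then 1 else 0)"
| "scan_count R M (x # xs) = scan_count R (add_mset x M) xs +
     (\<Sum>y\<in>#M. if R y x then scan_count R (M - {#y#}) xs else 0)"

lemma card_matchings_eq_scan_count:
  assumes "finite U" "\<forall>u\<in>U. u < k"
  shows "card (matchings R lab (U \<union> {k..<m}) U) =
    scan_count R (image_mset lab (mset_set U)) (map lab [k..<m])"
  using assms
proof (induction "m - k" arbitrary: k U)
  case 0
  then have A: "U \<union> {k..<m} = U" and xs: "[k..<m] = []" by auto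
  have "image_mset lab (mset_set U) = {#} \<longleftrightarrow> U = {}"
    using \<open>finite U\<close> by (simp add: mset_set_empty_iff)
  then show ?case unfolding A xs matchings_self list.map scan_count.simps(1) by (cases "U = {}") simp_all
next
  case (Suc n)
  define M where "M = image_mset lab (mset_set U)"
  define xs where "xs = map lab [Suc k..<m]"
  have IH: "card (matchings R lab (U' \<union> {Suc k..<m}) U') = scan_count R (image_mset lab (mset_set U')) xs"
    if "finite U'" "\<forall>u\<in>U'. u < Suc k" for U'
  proof -
    have "n = m - Suc k" using Suc.hyps(2) by simp
    from Suc.hyps(1)[OF this that] show ?thesis unfolding xs_def .
  qed
  have km: "k < m" and kU: "k \<notin> U" using Suc by auto
  have A: "U \<union> {k..<m} = insert k U \<union> {Suc k..<m}" using km by auto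
  have open_k: "card (matchings R lab (U \<union> {k..<m}) (insert k U)) = scan_count R (add_mset (lab k) M) xs"
    unfolding A using Suc.prems kU by (subst IH) (auto simp: M_def)
  have close_k: "card (matchings R lab (U \<union> {k..<m} - {u, k}) (U - {u})) = scan_count R (M - {#lab u#}) xs"
    if u: "u \<in> U" for u
  proof -
    have A': "U \<union> {k..<m} - {u, k} = (U - {u}) \<union> {Suc k..<m}" using Suc.prems u by auto
    have M': "image_mset lab (mset_set (U - {u})) = M - {#lab u#}"
      using Suc.prems u unfolding M_def by (simp add: mset_set_Diff image_mset_Diff)
    have "finite (U - {u})" "\<forall>u'\<in>U - {u}. u' < Suc k" using Suc.prems by auto
    from IH[OF this] show ?thesis unfolding A' M' .
  qed
  have "card (matchings R lab (U \<union> {k..<m}) U) = card (matchings R lab (U \<union> {k..<m}) (insert k U)) +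
      (\<Sum>u\<in>U. if R (lab u) (lab k) then card (matchings R lab (U \<union> {k..<m} - {u, k}) (U - {u})) else 0)"
    using Suc.prems km kU by (intro card_matchings_split) auto
  also have "\<dots> = scan_count R (add_mset (lab k) M) xs +
      (\<Sum>u\<in>U. if R (lab u) (lab k) then scan_count R (M - {#lab u#}) xs else 0)"
    unfolding open_k using close_k by (intro arg_cong2[where f = "(+)"] sum.cong refl) (simp only:)
  also have "(\<Sum>u\<in>U. if R (lab u) (lab k) then scan_count R (M - {#lab u#}) xs else 0) =
      (\<Sum>y\<in>#M. if R y (lab k) then scan_count R (M - {#y#}) xs else 0)"
    unfolding M_def sum_unfold_sum_mset by (simp add: image_mset.compositionality comp_def)
  finally show ?case using km unfolding M_def xs_def by (simp add: upt_conv_Cons)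
qed

section \<open>Classes of elementary operators\<close>

(* occupied, virtual and arbitrary creation (OC, VC, AC) and annihilation (OA, VA, AA) operators *)
datatype op_class = OC | OA | VC | VA | AC | AA

fun contractible :: "op_class \<Rightarrow> op_class \<Rightarrow> bool" where
  "contractible OC y \<longleftrightarrow> y = OA \<or> y = AA"
| "contractible AC y \<longleftrightarrow> y = OA \<or> y = AA"
| "contractible VA y \<longleftrightarrow> y = VC \<or> y = AC"
| "contractible AA y \<longleftrightarrow> y = VC \<or> y = AC"
| "contractible OA y \<longleftrightarrow> False"
| "contractible VC y \<longleftrightarrow> False"

fun classify :: "nat \<Rightarrow> elop \<Rightarrow> op_class" where
  "classify Nocc (c, None) = (if c then AC else AA)"
| "classify Nocc (c, Some p) = (if p \<le> Nocc then if c then OC else OA else if c then VC else VA)"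

lemma classify_iff:
  "fst x \<longleftrightarrow> classify Nocc x \<in> {OC, VC, AC}"
  "is_o Nocc x \<longleftrightarrow> classify Nocc x \<in> {OC, OA}"
  "is_v Nocc x \<longleftrightarrow> classify Nocc x \<in> {VC, VA}"
  by (cases "(Nocc, x)" rule: classify.cases; auto simp: is_o_def is_v_def)+

lemma allowed_pair_iff_contractible:
  "allowed_pair Nocc x y \<longleftrightarrow> contractible (classify Nocc x) (classify Nocc y)"
  unfolding allowed_pair_def classify_iff[where Nocc = Nocc]
  by (cases "classify Nocc x"; cases "classify Nocc y") auto

lemma pair_partitions_eq_matchings:
  "{P \<in> pair_partitions m. \<forall>(i, j)\<in>P. R (lab i) (lab j)} = matchings R lab {0..<m} {}"
proof (intro set_eqI iffI)
  fix P assume "P \<in> {P \<in> pair_partitions m. \<forall>(i, j)\<in>P. R (lab i) (lab j)}"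
  then have sub: "P \<subseteq> {(i, j). i < j \<and> j < m}" and cover: "\<forall>k<m. \<exists>!q. q \<in> P \<and> (fst q = k \<or> snd q = k)"
    and compat: "\<forall>(i, j)\<in>P. R (lab i) (lab j)"
    unfolding pair_partitions_def by auto
  show "P \<in> matchings R lab {0..<m} {}"
  proof (rule matchingsI)
    fix i j assume "(i, j) \<in> P"
    then show "i < j \<and> i \<in> {0..<m} \<and> j \<in> {0..<m} \<and> R (lab i) (lab j) \<and> \<not> (i \<in> {} \<and> j \<in> {})"
      using sub compat by auto
  next
    fix k assume "k \<in> {0..<m}"
    then show "\<exists>!q. q \<in> P \<and> (fst q = k \<or> snd q = k)" using cover by simp
  qed
next
  fix P assume P: "P \<in> matchings R lab {0..<m} {}"
  have "P \<subseteq> {(i, j). i < j \<and> j < m}" "\<forall>(i, j)\<in>P. R (lab i) (lab j)"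
    using matchings_pairD[OF P] by auto
  moreover have "\<forall>k<m. \<exists>!q. q \<in> P \<and> (fst q = k \<or> snd q = k)"
    using matchings_coverD[OF P] by simp
  ultimately show "P \<in> {P \<in> pair_partitions m. \<forall>(i, j)\<in>P. R (lab i) (lab j)}"
    unfolding pair_partitions_def by blast
qed

lemma W_eq_scan_count: "W Nocc X = scan_count contractible {#} (map (classify Nocc) X)"
proof -
  define lab where "lab i = classify Nocc (X ! i)" for i
  have "W Nocc X = card {P \<in> pair_partitions (length X). \<forall>(i, j)\<in>P. contractible (lab i) (lab j)}"
    unfolding W_def allowed_pair_iff_contractible lab_def ..
  also have "\<dots> = card (matchings contractible lab {0..<length X} {})"
    unfolding pair_partitions_eq_matchings ..
  also have "\<dots> = scan_count contractible {#} (map lab [0..<length X])"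
    using card_matchings_eq_scan_count[of "{}" 0 contractible lab "length X"]
    by (simp only: finite.emptyI ball_empty Un_empty_left mset_set.empty image_mset_empty)
  also have "map lab [0..<length X] = map (classify Nocc) X"
    by (rule nth_equalityI) (simp_all add: lab_def)
  finally show ?thesis .
qed

definition opens :: "nat \<Rightarrow> nat \<Rightarrow> nat \<Rightarrow> nat \<Rightarrow> op_class multiset" where
  "opens a c p m = replicate_mset a OC + replicate_mset c VA + replicate_mset p AC + replicate_mset m AA"

lemma count_opens:
  "count (opens a c p m) y = (case y of OC \<Rightarrow> a | VA \<Rightarrow> c | AC \<Rightarrow> p | AA \<Rightarrow> m | _ \<Rightarrow> 0)"
  by (cases y) (auto simp: opens_def)

lemma opens_simps [simp]:
  "opens 0 0 0 0 = {#}"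
  "opens a c p m = {#} \<longleftrightarrow> a = 0 \<and> c = 0 \<and> p = 0 \<and> m = 0"
  "add_mset OC (opens a c p m) = opens (Suc a) c p m"
  "add_mset VA (opens a c p m) = opens a (Suc c) p m"
  "add_mset AC (opens a c p m) = opens a c (Suc p) m"
  "add_mset AA (opens a c p m) = opens a c p (Suc m)"
  "opens a c p m - {#OC#} = opens (a - 1) c p m"
  "opens a c p m - {#VA#} = opens a (c - 1) p m"
  "opens a c p m - {#AC#} = opens a c (p - 1) m"
  "opens a c p m - {#AA#} = opens a c p (m - 1)"
  by (auto simp: multiset_eq_iff count_opens split: op_class.splits)

lemma sum_mset_opens [simp]:
  "(\<Sum>y\<in>#opens a c p m. f y) = a * f OC + c * f VA + p * f AC + m * f AA"
  by (simp add: opens_def)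

lemma scan_count_dead:
  assumes "y \<in># M" "\<And>z. \<not> R y z"
  shows "scan_count R M xs = 0"
  using assms(1)
proof (induction xs arbitrary: M)
  case Nil
  then show ?case by auto
next
  case (Cons x xs)
  have "(\<Sum>y'\<in>#M. if R y' x then scan_count R (M - {#y'#}) xs else 0) = (\<Sum>y'\<in>#M. 0)"
  proof (intro arg_cong[where f = sum_mset] image_mset_cong)
    fix y' assume "y' \<in># M"
    show "(if R y' x then scan_count R (M - {#y'#}) xs else 0) = 0"
      using Cons assms(2)[of x] by (auto intro: Cons.IH simp: in_diff_count)
  qed
  then show ?case using Cons by simp
qed

lemma scan_count_add_mset_dead [simp]:
  "scan_count contractible (add_mset OA M) xs = 0"
  "scan_count contractible (add_mset VC M) xs = 0"
  by (auto intro: scan_count_dead)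

fun bracket_classes :: "bool \<Rightarrow> op_class list" where
  "bracket_classes True = [OC, VA]"
| "bracket_classes False = [VC, OA]"

abbreviation bracket_word :: "bool list \<Rightarrow> op_class list" where
  "bracket_word s \<equiv> concat (map bracket_classes s)"

lemma map_classify_expand:
  "i \<le> Nocc \<Longrightarrow> Nocc < a \<Longrightarrow> map (classify Nocc) (expand (b, i, a)) = bracket_classes b"
  by (cases b) auto

lemma map_classify_expand_chain:
  assumes "\<forall>(b, i, a)\<in>set C. i \<le> Nocc \<and> Nocc < a"
  shows "map (classify Nocc) (expand_chain C) = bracket_word (word_of C)"
  using assms by (induction C) (auto simp: expand_chain_def word_of_def map_classify_expand)

section \<open>Bracket words\<close>

lemma height_simps [simp]:
  "height [] = 0"
  "height (True # s) = height s + 1"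
  "height (False # s) = height s - 1"
  by (simp_all add: height_def)

lemma height_append: "height (s @ t) = height s + height t"
  by (simp add: height_def)

lemma height_word_of: "height (word_of C) = 2 * int (length (filter fst C)) - int (length C)"
  by (induction C) (auto simp: word_of_def)

fun bracket_level :: "nat \<Rightarrow> bool list \<Rightarrow> nat" where
  "bracket_level h [] = h"
| "bracket_level h (True # s) = bracket_level (Suc h) s"
| "bracket_level h (False # s) = bracket_level (h - 1) s"

(* Ways to pair every ")" with a still unpaired "(" to its left, h of them being available at
   the start; balanced_ways moreover requires that no "(" is left unpaired. *)
fun bracket_ways :: "nat \<Rightarrow> bool list \<Rightarrow> nat" where
  "bracket_ways h [] = 1"
| "bracket_ways h (True # s) = bracket_ways (Suc h) s"
| "bracket_ways h (False # s) = h * bracket_ways (h - 1) s"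

fun balanced_ways :: "nat \<Rightarrow> bool list \<Rightarrow> nat" where
  "balanced_ways h [] = (if h = 0 then 1 else 0)"
| "balanced_ways h (True # s) = balanced_ways (Suc h) s"
| "balanced_ways h (False # s) = h * balanced_ways (h - 1) s"

lemma balanced_ways_append:
  "balanced_ways h (s @ t) = bracket_ways h s * balanced_ways (bracket_level h s) t"
  by (induction h s rule: bracket_ways.induct) auto

lemma bracket_level_eq_height:
  "bracket_ways h s \<noteq> 0 \<Longrightarrow> int (bracket_level h s) = int h + height s"
  by (induction h s rule: bracket_ways.induct) auto

lemma balanced_ways_height:
  assumes "balanced_ways h s \<noteq> 0"
  shows "int h + height s = 0"
proof -
  have "bracket_ways h s \<noteq> 0" "bracket_level h s = 0"
    using assms balanced_ways_append[of h s "[]"] by (auto split: if_splits)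
  then show ?thesis using bracket_level_eq_height by fastforce
qed

lemma dyck_if_balanced_ways:
  assumes "balanced_ways 0 s \<noteq> 0"
  shows "dyck s"
  unfolding dyck_def
proof (intro conjI allI impI)
  show "height s = 0" using balanced_ways_height[OF assms] by simp
  fix k
  have "bracket_ways 0 (take k s) \<noteq> 0"
    using assms balanced_ways_append[of 0 "take k s" "drop k s"] by auto
  then show "0 \<le> height (take k s)" using bracket_level_eq_height by fastforce
qed

section \<open>Scanning chains with an inserted block\<close>

lemma scan_count_bracket_word:
  "scan_count contractible (opens a c p m) (bracket_word s) =
     balanced_ways (a + p) s * balanced_ways (c + m) s"
proof (induction s arbitrary: a c p m)
  case Nil
  then show ?case by simp
next
  case (Cons b s)
  show ?case
  proof (cases b)
    case True
    then show ?thesis using Cons.IH by simp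
  next
    case False
    let ?S = "\<lambda>a c p m. scan_count contractible (opens a c p m) (bracket_word s)"
    let ?B = "\<lambda>h. balanced_ways h s"
    have "scan_count contractible (opens a c p m) (bracket_word (b # s)) =
        c * (a * ?S (a - 1) (c - 1) p m + p * ?S a (c - 1) (p - 1) m) +
        m * (a * ?S (a - 1) c p (m - 1) + p * ?S a c (p - 1) (m - 1))"
      using False by simp
    also have "\<dots> = c * (a * ?B (a - 1 + p) * ?B (c - 1 + m) + p * ?B (a + (p - 1)) * ?B (c - 1 + m)) +
        m * (a * ?B (a - 1 + p) * ?B (c + (m - 1)) + p * ?B (a + (p - 1)) * ?B (c + (m - 1)))"
      unfolding Cons.IH by (simp add: mult.assoc)
    also have "\<dots> = (a + p) * ?B (a + p - 1) * ((c + m) * ?B (c + m - 1))"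
      by (cases a; cases c; cases p; cases m) (simp_all add: algebra_simps)
    finally show ?thesis using False by simp
  qed
qed

lemma scan_count_bracket_word_append:
  "scan_count contractible (opens a c 0 0) (bracket_word s @ xs) =
     bracket_ways a s * bracket_ways c s *
     scan_count contractible (opens (bracket_level a s) (bracket_level c s) 0 0) xs"
proof (induction s arbitrary: a c)
  case Nil
  then show ?case by simp
next
  case (Cons b s)
  then show ?case by (cases b) simp_all
qed

lemma sum_atMost_Suc_choose:
  "(\<Sum>i\<le>Suc k. (Suc k choose i) * f i) = (\<Sum>i\<le>k. (k choose i) * f i) + (\<Sum>i\<le>k. (k choose i) * f (Suc i))"
proof -
  have "(\<Sum>i\<le>Suc k. (Suc k choose i) * f i) = f 0 + (\<Sum>i\<le>k. (Suc k choose Suc i) * f (Suc i))"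
    by (subst sum.atMost_Suc_shift) (simp del: sum.atMost_Suc)
  also have "\<dots> = f 0 + (\<Sum>i\<le>k. (k choose Suc i) * f (Suc i)) + (\<Sum>i\<le>k. (k choose i) * f (Suc i))"
    by (simp add: sum.distrib algebra_simps)
  also have "f 0 + (\<Sum>i\<le>k. (k choose Suc i) * f (Suc i)) = (\<Sum>i\<le>Suc k. (k choose i) * f i)"
    by (subst sum.atMost_Suc_shift) (simp del: sum.atMost_Suc)
  also have "\<dots> = (\<Sum>i\<le>k. (k choose i) * f i)"
    by simp
  finally show ?thesis .
qed

fun falling_fact :: "nat \<Rightarrow> nat \<Rightarrow> nat" where
  "falling_fact n 0 = 1"
| "falling_fact n (Suc k) = n * falling_fact (n - 1) k"

lemma falling_fact_eq_0: "n < k \<Longrightarrow> falling_fact n k = 0"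
  by (induction n k rule: falling_fact.induct) (auto simp: less_Suc_eq_0_disj)

lemma falling_fact_mult_fact: "k \<le> n \<Longrightarrow> falling_fact n k * fact (n - k) = fact n"
proof (induction n k rule: falling_fact.induct)
  case (1 n)
  then show ?case by simp
next
  case (2 n k)
  then obtain n' where n: "n = Suc n'" by (cases n) auto
  then show ?case using 2 by (simp add: algebra_simps)
qed

lemma scan_count_replicate_AC:
  "scan_count contractible (opens a c p 0) (replicate k AC @ xs) =
     (\<Sum>i\<le>k. (k choose i) *
        (falling_fact c i * scan_count contractible (opens a (c - i) (p + k - i) 0) xs))"
proof (induction k arbitrary: c p)
  case 0
  then show ?case by simp
next
  case (Suc k)
  let ?S = "\<lambda>c' p'. scan_count contractible (opens a c' p' 0) xs"
  have "scan_count contractible (opens a c p 0) (replicate (Suc k) AC @ xs) =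
      scan_count contractible (opens a c (Suc p) 0) (replicate k AC @ xs) +
      c * scan_count contractible (opens a (c - 1) p 0) (replicate k AC @ xs)"
    by simp
  also have "\<dots> = (\<Sum>i\<le>k. (k choose i) * (falling_fact c i * ?S (c - i) (p + Suc k - i))) +
      (\<Sum>i\<le>k. (k choose i) * (falling_fact c (Suc i) * ?S (c - Suc i) (p + Suc k - Suc i)))"
    unfolding Suc.IH by (simp add: sum_distrib_left algebra_simps)
  also have "\<dots> = (\<Sum>i\<le>Suc k. (Suc k choose i) * (falling_fact c i * ?S (c - i) (p + Suc k - i)))"
    by (rule sum_atMost_Suc_choose[symmetric])
  finally show ?case .
qed

lemma scan_count_replicate_AA_bracket_word:
  "scan_count contractible (opens a c p m) (replicate l AA @ bracket_word s) =
     (\<Sum>j\<le>l. (l choose j) *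
        (falling_fact (a + p) j * balanced_ways (a + p - j) s * balanced_ways (c + m + l - j) s))"
proof (induction l arbitrary: a c p m)
  case 0
  then show ?case by (simp add: scan_count_bracket_word)
next
  case (Suc l)
  let ?S = "\<lambda>a c p m. scan_count contractible (opens a c p m) (replicate l AA @ bracket_word s)"
  let ?B = "\<lambda>h. balanced_ways h s"
  define X where "X h h' = (\<Sum>j\<le>l. (l choose j) * (falling_fact h j * ?B (h - j) * ?B (h' + l - j)))"
    for h h'
  have "scan_count contractible (opens a c p m) (replicate (Suc l) AA @ bracket_word s) =
      ?S a c p (Suc m) + a * ?S (a - 1) c p m + p * ?S a c (p - 1) m"
    by simp
  also have "\<dots> = X (a + p) (Suc (c + m)) + a * X (a - 1 + p) (c + m) + p * X (a + (p - 1)) (c + m)"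
    unfolding Suc.IH X_def by simp
  also have "\<dots> = X (a + p) (Suc (c + m)) + (a + p) * X (a + p - 1) (c + m)"
    by (cases a; cases p) (simp_all add: algebra_simps)
  also have "\<dots> = (\<Sum>j\<le>l. (l choose j) *
        (falling_fact (a + p) j * ?B (a + p - j) * ?B (c + m + Suc l - j))) +
      (\<Sum>j\<le>l. (l choose j) *
        (falling_fact (a + p) (Suc j) * ?B (a + p - Suc j) * ?B (c + m + Suc l - Suc j)))"
    unfolding X_def by (simp add: sum_distrib_left algebra_simps)
  also have "\<dots> = (\<Sum>j\<le>Suc l. (Suc l choose j) *
        (falling_fact (a + p) j * ?B (a + p - j) * ?B (c + m + Suc l - j)))"
    by (rule sum_atMost_Suc_choose[symmetric])
  finally show ?case .
qed

lemma falling_fact_mult_falling_fact: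
  assumes "i \<le> d" "i \<le> N"
  shows "falling_fact d i * falling_fact (d + N - i) (N - i) = fact N * (d + N - i choose N)"
proof -
  have "falling_fact d i * falling_fact (d + N - i) (N - i) * fact (d - i) = falling_fact (d + N - i) (N - i) * fact d"
    using falling_fact_mult_fact[of i d] assms by (simp add: algebra_simps)
  also have "\<dots> = fact (d + N - i)"
    using falling_fact_mult_fact[of "N - i" "d + N - i"] assms by simp
  also have "\<dots> = fact N * (d + N - i choose N) * fact (d - i)"
    using binomial_fact_lemma[of N "d + N - i"] assms by (simp add: algebra_simps)
  finally show ?thesis by simp
qed

lemma sum_falling_fact_eq_Mcoef:
  "(\<Sum>i\<le>N. (N choose i)^2 * (falling_fact d i * falling_fact (d + N - i) (N - i))) = fact N * Mcoef N d"
proof -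
  have "(\<Sum>i\<le>N. (N choose i)^2 * (falling_fact d i * falling_fact (d + N - i) (N - i))) =
      (\<Sum>i = 0..min N d. (N choose i)^2 * (fact N * (d + N - i choose N)))"
    by (rule sum.mono_neutral_cong_right) (auto simp: falling_fact_eq_0 falling_fact_mult_falling_fact)
  also have "\<dots> = fact N * Mcoef N d"
    unfolding Mcoef_def by (simp add: sum_distrib_left algebra_simps)
  finally show ?thesis .
qed

lemma sum_choose_balanced_ways_collapse:
  assumes "\<And>h. balanced_ways h s \<noteq> 0 \<Longrightarrow> h = d" and "i \<le> N" "i \<le> d"
  shows "(\<Sum>j\<le>N. (N choose j) * (falling_fact (d + (N - i)) j *
            balanced_ways (d + (N - i) - j) s * balanced_ways (d - i + N - j) s)) =
    (N choose i) * falling_fact (d + (N - i)) (N - i) * balanced_ways d s ^ 2"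
proof -
  define f where "f j = (N choose j) * (falling_fact (d + (N - i)) j *
      balanced_ways (d + (N - i) - j) s * balanced_ways (d - i + N - j) s)" for j
  have "f j = 0" if "j \<noteq> N - i" for j
    using that assms(1)[of "d + (N - i) - j"] falling_fact_eq_0[of "d + (N - i)" j]
    unfolding f_def by fastforce
  then have "sum f ({..N} - {N - i}) = 0" by (intro sum.neutral) blast
  moreover have "sum f {..N} = f (N - i) + sum f ({..N} - {N - i})" by (rule sum.remove) auto
  ultimately have "sum f {..N} = (N choose (N - i)) * (falling_fact (d + (N - i)) (N - i) *
      balanced_ways (d + (N - i) - (N - i)) s * balanced_ways (d - i + N - (N - i)) s)"
    unfolding f_def by simp
  also have "\<dots> = (N choose i) * falling_fact (d + (N - i)) (N - i) * balanced_ways d s ^ 2"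
    using assms(2,3) by (simp add: binomial_symmetric[symmetric] power2_eq_square)
  finally show ?thesis unfolding f_def .
qed

lemma scan_count_inserted_block:
  assumes "\<And>h. balanced_ways h s \<noteq> 0 \<Longrightarrow> h = d"
  shows "scan_count contractible (opens d d 0 0) (replicate N AC @ replicate N AA @ bracket_word s) =
    fact N * Mcoef N d * balanced_ways d s ^ 2"
proof -
  let ?B = "\<lambda>h. balanced_ways h s"
  have "scan_count contractible (opens d d 0 0) (replicate N AC @ replicate N AA @ bracket_word s) =
      (\<Sum>i\<le>N. (N choose i) * (falling_fact d i * (\<Sum>j\<le>N. (N choose j) *
        (falling_fact (d + (N - i)) j * ?B (d + (N - i) - j) * ?B (d - i + N - j)))))"
    by (simp add: scan_count_replicate_AC scan_count_replicate_AA_bracket_word)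
  also have "\<dots> = (\<Sum>i\<le>N. (N choose i)^2 * (falling_fact d i * falling_fact (d + N - i) (N - i))) * ?B d ^ 2"
    unfolding sum_distrib_right
  proof (rule sum.cong[OF refl])
    fix i assume "i \<in> {..N}"
    then have i: "i \<le> N" by simp
    show "(N choose i) * (falling_fact d i * (\<Sum>j\<le>N. (N choose j) *
          (falling_fact (d + (N - i)) j * ?B (d + (N - i) - j) * ?B (d - i + N - j)))) =
      (N choose i)^2 * (falling_fact d i * falling_fact (d + N - i) (N - i)) * ?B d ^ 2"
    proof (cases "i \<le> d")
      case True
      with i show ?thesis
        using sum_choose_balanced_ways_collapse[OF assms i True] by (simp add: power2_eq_square)
    next
      case False
      then show ?thesis by (simp add: falling_fact_eq_0)
    qed
  qed
  also have "\<dots> = fact N * Mcoef N d * ?B d ^ 2"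
    unfolding sum_falling_fact_eq_Mcoef ..
  finally show ?thesis .
qed

lemma W_expand_chain:
  assumes "\<forall>(b, i, a)\<in>set C. i \<le> Nocc \<and> Nocc < a"
  shows "W Nocc (expand_chain C) = balanced_ways 0 (word_of C) ^ 2"
  using scan_count_bracket_word[of 0 0 0 0 "word_of C"]
  by (simp add: W_eq_scan_count map_classify_expand_chain[OF assms] power2_eq_square)

lemma W_insert_chain:
  assumes idx: "\<forall>(b, i, a)\<in>set C. i \<le> Nocc \<and> Nocc < a" and bal: "height (word_of C) = 0"
  shows "W Nocc (insert_chain C N K) =
    fact N * Mcoef N (nat (height (take K (word_of C)))) * W Nocc (expand_chain C)"
proof -
  define S1 where "S1 = take K (word_of C)"
  define S2 where "S2 = drop K (word_of C)"
  define d where "d = bracket_level 0 S1"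
  have "\<forall>(b, i, a)\<in>set (take K C). i \<le> Nocc \<and> Nocc < a" "\<forall>(b, i, a)\<in>set (drop K C). i \<le> Nocc \<and> Nocc < a"
    using idx by (auto dest: in_set_takeD in_set_dropD)
  from this[THEN map_classify_expand_chain]
  have "map (classify Nocc) (insert_chain C N K) = bracket_word S1 @
      replicate N AC @ replicate N AA @ bracket_word S2"
    unfolding insert_chain_def S1_def S2_def by (simp add: word_of_def take_map drop_map)
  then have ins: "W Nocc (insert_chain C N K) = bracket_ways 0 S1 ^ 2 *
      scan_count contractible (opens d d 0 0) (replicate N AC @ replicate N AA @ bracket_word S2)"
    using scan_count_bracket_word_append[of 0 0 S1]
    by (simp add: W_eq_scan_count d_def power2_eq_square)
  have exp: "W Nocc (expand_chain C) = (bracket_ways 0 S1 * balanced_ways d S2) ^ 2"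
    using W_expand_chain[OF idx] balanced_ways_append[of 0 S1 S2] unfolding S1_def S2_def d_def by simp
  show ?thesis
  proof (cases "bracket_ways 0 S1 = 0")
    case True
    then show ?thesis using ins exp by simp
  next
    case False
    then have d: "int d = height S1" using bracket_level_eq_height unfolding d_def by fastforce
    moreover have "height S1 + height S2 = 0"
      using bal height_append[of S1 S2] unfolding S1_def S2_def by simp
    ultimately have "h = d" if "balanced_ways h S2 \<noteq> 0" for h
      using balanced_ways_height[OF that] by simp
    then have "scan_count contractible (opens d d 0 0) (replicate N AC @ replicate N AA @ bracket_word S2) =
        fact N * Mcoef N d * balanced_ways d S2 ^ 2"
      by (rule scan_count_inserted_block)
    moreover have "nat (height S1) = d" using d by simp
    ultimately show ?thesis using ins exp unfolding S1_def[symmetric] by (simp add: power_mult_distrib)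
  qed
qed

theorem mainTheorem5:
  fixes L Nocc n N K :: nat and C :: "exop list"
  assumes "1 \<le> Nocc" and "Nocc < L"
    and "length C = 2 * n"
    and "length (filter fst C) = n"
    and "\<forall>(b, i, a) \<in> set C. 1 \<le> i \<and> i \<le> Nocc \<and> Nocc < a \<and> a \<le> L"
    and "1 \<le> N" and "K \<le> 2 * n"
  shows "(\<not> dyck (word_of C) \<longrightarrow> W Nocc (insert_chain C N K) = 0) \<and>
         (dyck (word_of C) \<longrightarrow>
            W Nocc (insert_chain C N K) =
              fact N * Mcoef N (nat (height (take K (word_of C)))) * W Nocc (expand_chain C))"
proof -
  have idx: "\<forall>(b, i, a)\<in>set C. i \<le> Nocc \<and> Nocc < a" using assms(5) by auto
  have bal: "height (word_of C) = 0" using assms(3,4) by (simp add: height_word_of)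
  have "W Nocc (expand_chain C) = 0" if "\<not> dyck (word_of C)"
    using that dyck_if_balanced_ways W_expand_chain[OF idx] by fastforce
  then show ?thesis using W_insert_chain[OF idx bal] by simp
qed

end
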